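(* Let $\Gamma$ be a Jordan curve in $\mathbb{C}$ and let $D$ be the bounded open region enclosed by $\Gamma$. Let $f$ be a non-constant function analytic on an open set containing the closure $\overline{D} = D \cup \Gamma$, and suppose there is a constant $C$ such that $|f(z)| = C$ for every $z \in \Gamma$. Let $N(f)$ denote the number of zeros of $f$ in $D$ and $N(f')$ the number of zeros of the derivative $f'$ in $D$, both counted according to multiplicity. Then $$N(f) = N(f') + 1.$$
   Context: Zeros are counted with multiplicity: a zero $z_0$ of an analytic function $g$ has multiplicity $k$ if $g(z_0)=g'(z_0)=\dots=g^{(k-1)}(z_0)=0$ and $g^{(k)}(z_0)\neq 0$. *)

theory Defs
  imports "HOL-Analysis.Analysis"
begin

definition zero_multiplicity :: "(complex \<Rightarrow> complex) \<Rightarrow> complex \<Rightarrow> nat" where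
  "zero_multiplicity g z0 = (LEAST k. (deriv ^^ k) g z0 \<noteq> 0)"

definition num_zeros :: "(complex \<Rightarrow> complex) \<Rightarrow> complex set \<Rightarrow> nat" where
  "num_zeros g A = (\<Sum>z\<in>{z\<in>A. g z = 0}. zero_multiplicity g z)"

end

theory Submission
  imports Defs "HOL-Complex_Analysis.Complex_Analysis"
begin

text \<open>
  A Riemann map \<open>\<psi>\<close> from the unit disc onto the inside \<open>D\<close> of the curve preserves the
  multiplicities of the zeros of \<open>f\<close> and, since \<open>\<psi>'\<close> has no zeros, also those of \<open>f'\<close>.
  So it suffices to consider \<open>h = f \<circ> \<psi>\<close> on the unit disc, where the hypothesis becomes
  \<open>|h z| \<rightarrow> C\<close> as \<open>|z| \<rightarrow> 1\<close>. Dividing out a zero by a Blaschke factor, which has modulus 1 on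
  the unit circle, preserves this property, and a zero-free such function is constant by the
  maximum principle. By induction on the number of zeros, \<open>h\<close> extends across the circle and,
  once it has a zero, \<open>Re (z h'(z) / h(z)) > 0\<close> there: each Blaschke factor contributes a
  Poisson kernel. Hence \<open>Ln (z h'/h)\<close> is a primitive of \<open>1/z + h''/h' - h'/h\<close> near the
  circle, and the argument principle for \<open>h\<close> and for \<open>h'\<close> gives \<open>N(h') = N(h) - 1\<close>.
\<close>

section \<open>Multiplicities of zeros\<close>

lemma zero_multiplicity_eq_0: "g z \<noteq> 0 \<Longrightarrow> zero_multiplicity g z = 0"
  unfolding zero_multiplicity_def by simp

lemma zero_multiplicity_eq_1:
  assumes "g z = 0" "deriv g z \<noteq> 0"
  shows "zero_multiplicity g z = 1"
  unfolding zero_multiplicity_def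
proof (rule Least_equality)
  show "(deriv ^^ 1) g z \<noteq> 0" using assms(2) by simp
  show "1 \<le> k" if "(deriv ^^ k) g z \<noteq> 0" for k
    using that assms(1) by (cases k) auto
qed

lemma zero_multiplicity_cong:
  assumes "eventually (\<lambda>x. f x = g x) (nhds z)"
  shows "zero_multiplicity f z = zero_multiplicity g z"
  unfolding zero_multiplicity_def using higher_deriv_cong_ev[OF assms refl] by simp

lemma eventually_nonzero_at:
  assumes "g holomorphic_on A" "open A" "connected A" "z \<in> A" "\<exists>w\<in>A. g w \<noteq> 0"
  shows "eventually (\<lambda>x. g x \<noteq> 0) (at z)"
proof -
  obtain w where "w \<in> A" "g w \<noteq> 0" using assms(5) by blast
  from non_zero_neighbour_alt[OF assms(1-4) this] show ?thesis
    by (rule eventually_mono) simp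
qed

lemma finite_zeros_in_compact:
  assumes "g holomorphic_on A" "open A" "connected A" "compact K" "K \<subseteq> A" "\<exists>w\<in>A. g w \<noteq> 0"
  shows "finite {z\<in>K. g z = 0}"
proof (cases "g constant_on A")
  case True
  then have "{z\<in>K. g z = 0} = {}"
    using assms(5,6) unfolding constant_on_def by fastforce
  then show ?thesis by (metis finite.emptyI)
qed (use holomorphic_compact_finite_zeros assms in blast)

lemma zorder_eq_zero_multiplicity:
  assumes "g holomorphic_on A" "open A" "connected A" "z \<in> A" "\<exists>w\<in>A. g w \<noteq> 0"
  shows "zorder g z = int (zero_multiplicity g z)"
proof -
  have ex: "\<exists>k. (deriv ^^ k) g z \<noteq> 0"
    using holomorphic_fun_eq_0_on_connected[OF assms(1-3) _ assms(4)] assms(5) by blast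
  show ?thesis
  proof (rule zorder_zero_eqI[OF assms(1,2,4)])
    show "\<And>i. i < nat (int (zero_multiplicity g z)) \<Longrightarrow> (deriv ^^ i) g z = 0"
      unfolding zero_multiplicity_def using not_less_Least by auto
    show "(deriv ^^ nat (int (zero_multiplicity g z))) g z \<noteq> 0"
      unfolding zero_multiplicity_def using LeastI_ex[OF ex] by simp
  qed auto
qed

lemma num_zeros_cong:
  assumes "open A" "\<And>z. z \<in> A \<Longrightarrow> f z = g z"
  shows "num_zeros f A = num_zeros g A"
proof -
  have "zero_multiplicity f z = zero_multiplicity g z" if "z \<in> A" for z
    using assms that by (intro zero_multiplicity_cong eventually_nhds_in_open[THEN eventually_mono]) auto
  then show ?thesis
    unfolding num_zeros_def using assms(2) by (intro sum.cong) auto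
qed

lemma zero_multiplicity_mult:
  assumes "f holomorphic_on A" "g holomorphic_on A" "open A" "connected A" "z \<in> A"
    and "\<exists>w\<in>A. f w * g w \<noteq> 0"
  shows "zero_multiplicity (\<lambda>x. f x * g x) z = zero_multiplicity f z + zero_multiplicity g z"
proof -
  have fg: "(\<lambda>x. f x * g x) holomorphic_on A"
    using assms(1,2) by (intro holomorphic_intros)
  have "eventually (\<lambda>x. f x * g x \<noteq> 0) (at z)"
    using eventually_nonzero_at[OF fg assms(3-6)] .
  then have "zorder (\<lambda>x. f x * g x) z = zorder f z + zorder g z"
    using assms(1-3,5) by (intro zorder_times_analytic) (auto simp: analytic_at)
  moreover have "zorder (\<lambda>x. f x * g x) z = int (zero_multiplicity (\<lambda>x. f x * g x) z)"
    using zorder_eq_zero_multiplicity[OF fg assms(3-6)] .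
  moreover have "zorder f z = int (zero_multiplicity f z)" "zorder g z = int (zero_multiplicity g z)"
    using assms by (auto intro!: zorder_eq_zero_multiplicity)
  ultimately show ?thesis by simp
qed

lemma num_zeros_mult:
  assumes "f holomorphic_on A" "g holomorphic_on A" "open A" "connected A"
    and "\<exists>w\<in>A. f w * g w \<noteq> 0"
    and "finite {z\<in>A. f z = 0}" "finite {z\<in>A. g z = 0}"
  shows "num_zeros (\<lambda>x. f x * g x) A = num_zeros f A + num_zeros g A"
proof -
  define Z where "Z = {z\<in>A. f z = 0} \<union> {z\<in>A. g z = 0}"
  have Z: "finite Z" "{z\<in>A. f z * g z = 0} = Z" using assms(6,7) by (auto simp: Z_def)
  have "num_zeros (\<lambda>x. f x * g x) A = (\<Sum>z\<in>Z. zero_multiplicity f z + zero_multiplicity g z)"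
    unfolding num_zeros_def Z(2) using assms(1-5)
    by (intro sum.cong refl zero_multiplicity_mult) (auto simp: Z_def)
  also have "\<dots> = num_zeros f A + num_zeros g A"
    unfolding sum.distrib num_zeros_def using Z(1)
    by (intro arg_cong2[where f = "(+)"] sum.mono_neutral_right)
       (auto simp: Z_def intro!: zero_multiplicity_eq_0)
  finally show ?thesis .
qed

lemma zorder_sub_eq_1_if_injective:
  assumes "\<psi> holomorphic_on B" "open B" "inj_on \<psi> B" "z \<in> B"
  shows "zorder (\<lambda>x. \<psi> x - \<psi> z) z = 1"
proof (rule zorder_zero_eqI[OF _ assms(2,4)])
  show "(\<lambda>x. \<psi> x - \<psi> z) holomorphic_on B" using assms(1) by (intro holomorphic_intros)
  have "((\<lambda>x. \<psi> x - \<psi> z) has_field_derivative deriv \<psi> z) (at z)"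
    using holomorphic_derivI[OF assms(1,2,4)] by (auto intro!: derivative_eq_intros)
  then show "(deriv ^^ nat 1) (\<lambda>x. \<psi> x - \<psi> z) z \<noteq> 0"
    using holomorphic_injective_imp_regular[OF assms] by (simp add: DERIV_imp_deriv)
qed auto

lemma zero_multiplicity_compose_injective:
  assumes F: "F holomorphic_on D" "open D" "connected D" "\<exists>w\<in>D. F w \<noteq> 0"
    and \<psi>: "\<psi> holomorphic_on B" "open B" "connected B" "inj_on \<psi> B" "\<psi> ` B = D"
    and u: "u holomorphic_on B" "\<And>x. x \<in> B \<Longrightarrow> u x \<noteq> 0"
    and z: "z \<in> B"
  shows "zero_multiplicity (\<lambda>x. F (\<psi> x) * u x) z = zero_multiplicity F (\<psi> z)"
proof -
  have \<psi>z: "\<psi> z \<in> D" using \<psi>(5) z by blast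
  have G: "(\<lambda>x. F (\<psi> x) * u x) holomorphic_on B"
    using holomorphic_on_compose_gen[OF \<psi>(1) F(1)] \<psi>(5) u(1)
    by (auto simp: comp_def intro!: holomorphic_intros)
  have G_nz: "\<exists>w\<in>B. F (\<psi> w) * u w \<noteq> 0" using F(4) \<psi>(5) u(2) by force
  have an: "g analytic_on {x}" if "g holomorphic_on A" "open A" "x \<in> A" for g A x
    using that analytic_at by blast
  have "eventually (\<lambda>x. F x \<noteq> 0) (at (\<psi> z))"
    using eventually_nonzero_at[OF F(1-3) \<psi>z F(4)] .
  moreover have "eventually (\<lambda>x. \<psi> x \<noteq> \<psi> z) (at z)"
    using eventually_at_in_open[OF \<psi>(2) z]
    by (rule eventually_mono) (use \<psi>(4) z in \<open>auto simp: inj_on_def\<close>)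
  ultimately have "zorder (F \<circ> \<psi>) z = zorder F (\<psi> z) * zorder (\<lambda>x. \<psi> x - \<psi> z) z"
    using an[OF F(1,2) \<psi>z] an[OF \<psi>(1,2) z]
    by (intro zorder_compose' isolated_singularity_at_analytic not_essential_analytic)
  moreover have "zorder (\<lambda>x. \<psi> x - \<psi> z) z = 1"
    by (rule zorder_sub_eq_1_if_injective[OF \<psi>(1,2,4) z])
  moreover have "zorder (\<lambda>x. F (\<psi> x) * u x) z = zorder (F \<circ> \<psi>) z + zorder u z"
    using eventually_nonzero_at[OF G \<psi>(2,3) z G_nz] analytic_on_compose[OF an[OF \<psi>(1,2) z]]
      an[OF F(1,2) \<psi>z] an[OF u(1) \<psi>(2) z]
    by (subst zorder_times_analytic) (auto simp: comp_def)
  moreover have "zorder u z = 0"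
    using an[OF u(1) \<psi>(2) z] u(2)[OF z] by (rule zorder_eq_0I)
  ultimately show ?thesis
    using zorder_eq_zero_multiplicity[OF G \<psi>(2,3) z G_nz] zorder_eq_zero_multiplicity[OF F(1-3) \<psi>z F(4)]
    by simp
qed

lemma num_zeros_compose_injective:
  assumes F: "F holomorphic_on D" "open D" "connected D" "\<exists>w\<in>D. F w \<noteq> 0"
    and \<psi>: "\<psi> holomorphic_on B" "open B" "connected B" "inj_on \<psi> B" "\<psi> ` B = D"
    and u: "u holomorphic_on B" "\<And>x. x \<in> B \<Longrightarrow> u x \<noteq> 0"
  shows "num_zeros (\<lambda>x. F (\<psi> x) * u x) B = num_zeros F D"
proof -
  define Z where "Z = {z\<in>B. F (\<psi> z) * u z = 0}"
  have "\<psi> ` Z = {w\<in>D. F w = 0}" using \<psi>(5) u(2) by (auto simp: Z_def)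
  moreover have "inj_on \<psi> Z" using \<psi>(4) by (rule inj_on_subset) (auto simp: Z_def)
  ultimately have "num_zeros F D = (\<Sum>z\<in>Z. zero_multiplicity F (\<psi> z))"
    unfolding num_zeros_def by (metis (no_types, lifting) sum.reindex_cong)
  also have "\<dots> = num_zeros (\<lambda>x. F (\<psi> x) * u x) B"
    unfolding num_zeros_def Z_def
    by (intro sum.cong refl zero_multiplicity_compose_injective[symmetric, OF F \<psi> u]) auto
  finally show ?thesis ..
qed

lemma num_zeros_deriv_compose_injective:
  assumes f: "f holomorphic_on D" "open D" "connected D" "\<not> f constant_on D"
    and \<psi>: "\<psi> holomorphic_on B" "open B" "connected B" "inj_on \<psi> B" "\<psi> ` B = D"
  shows "num_zeros (deriv (\<lambda>z. f (\<psi> z))) B = num_zeros (deriv f) D"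
proof -
  have "deriv (\<lambda>z. f (\<psi> z)) z = deriv f (\<psi> z) * deriv \<psi> z" if "z \<in> B" for z
    using that \<psi>(5) holomorphic_derivI[OF f(1,2)] holomorphic_derivI[OF \<psi>(1,2) that]
    by (intro DERIV_imp_deriv DERIV_chain2) auto
  then have "num_zeros (deriv (\<lambda>z. f (\<psi> z))) B = num_zeros (\<lambda>z. deriv f (\<psi> z) * deriv \<psi> z) B"
    by (rule num_zeros_cong[OF \<psi>(2)])
  also have "\<dots> = num_zeros (deriv f) D"
  proof (rule num_zeros_compose_injective[OF holomorphic_deriv[OF f(1,2)] f(2,3) _ \<psi>])
    show "\<exists>w\<in>D. deriv f w \<noteq> 0"
      using f has_field_derivative_0_imp_constant_on[of D f] holomorphic_derivI[OF f(1,2)] by force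
    show "deriv \<psi> holomorphic_on B" using \<psi>(1,2) by (rule holomorphic_deriv)
    show "\<And>x. x \<in> B \<Longrightarrow> deriv \<psi> x \<noteq> 0"
      using holomorphic_injective_imp_regular[OF \<psi>(1,2,4)] .
  qed
  finally show ?thesis .
qed

section \<open>Approaching the unit circle from inside\<close>

definition at_disc_boundary :: "complex filter" where
  "at_disc_boundary = filtercomap norm (at_left 1)"

lemma eventually_at_disc_boundary:
  "eventually P at_disc_boundary \<longleftrightarrow> (\<exists>\<rho><1. \<forall>z. \<rho> < norm z \<longrightarrow> norm z < 1 \<longrightarrow> P z)"
  unfolding at_disc_boundary_def eventually_filtercomap eventually_at_left_field
proof safe
  fix \<rho> assume "\<rho> < 1" "\<forall>z. \<rho> < norm z \<longrightarrow> norm z < 1 \<longrightarrow> P z"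
  then show "\<exists>Q. (\<exists>\<rho><1. \<forall>y>\<rho>. y < 1 \<longrightarrow> Q y) \<and> (\<forall>z. Q (norm z) \<longrightarrow> P z)"
    by (intro exI[of _ "\<lambda>x. \<rho> < x \<and> x < 1"]) auto
qed blast

lemma tendsto_at_disc_boundary_compose:
  fixes g :: "complex \<Rightarrow> 'a::metric_space"
  assumes D: "bounded D" "continuous_on (closure D) g" "\<And>w. w \<in> frontier D \<Longrightarrow> g w = c"
    and \<phi>: "continuous_on D \<phi>" "\<phi> ` D \<subseteq> ball 0 1"
    and \<psi>: "\<And>z. z \<in> ball 0 1 \<Longrightarrow> \<psi> z \<in> D \<and> \<phi> (\<psi> z) = z"
  shows "((\<lambda>z. g (\<psi> z)) \<longlongrightarrow> c) at_disc_boundary"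
proof (rule tendstoI)
  fix e :: real assume "e > 0"
  \<comment> \<open>\<open>A\<close> is a compact subset of \<open>D\<close>, so its image under \<open>\<phi>\<close> stays away from the unit circle.\<close>
  define A where "A = closure D \<inter> g -` {y. e \<le> dist y c}"
  have "closed A"
    unfolding A_def by (intro continuous_closed_preimage D(2) closed_closure closed_Collect_le continuous_intros)
  then have "compact A"
    using D(1) by (auto simp: A_def compact_eq_bounded_closed intro: bounded_subset)
  moreover have AD: "A \<subseteq> D"
    using closure_Un_frontier[of D] D(3) \<open>e > 0\<close> by (auto simp: A_def)
  ultimately have "compact (\<phi> ` A)"
    using continuous_on_subset[OF \<phi>(1)] by (blast intro: compact_continuous_image)
  then obtain \<rho> where \<rho>: "\<rho> < 1" "\<And>w. w \<in> A \<Longrightarrow> norm (\<phi> w) \<le> \<rho>"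
  proof (cases "A = {}")
    case False
    then obtain w0 where "w0 \<in> A" "\<And>w. w \<in> A \<Longrightarrow> norm (\<phi> w) \<le> norm (\<phi> w0)"
      using compact_attains_sup[OF compact_continuous_image[OF continuous_on_norm_id \<open>compact (\<phi> ` A)\<close>]]
      by auto
    then show ?thesis using that \<phi>(2) AD by (force simp: image_subset_iff)
  qed (use that[of 0] in auto)
  show "eventually (\<lambda>z. dist (g (\<psi> z)) c < e) at_disc_boundary"
    unfolding eventually_at_disc_boundary
  proof (intro exI[of _ \<rho>] conjI \<rho>(1) allI impI)
    fix z :: complex assume z: "\<rho> < norm z" "norm z < 1"
    then have "\<psi> z \<notin> A" using \<rho>(2)[of "\<psi> z"] \<psi> by auto
    then show "dist (g (\<psi> z)) c < e"
      using \<psi> z closure_subset by (force simp: A_def)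
  qed
qed

lemma tendsto_at_disc_boundary_of_sphere:
  fixes g :: "complex \<Rightarrow> 'a::metric_space"
  assumes "continuous_on (cball 0 1) g" "\<And>w. w \<in> sphere 0 1 \<Longrightarrow> g w = c"
  shows "(g \<longlongrightarrow> c) at_disc_boundary"
  using tendsto_at_disc_boundary_compose[of "ball 0 1" g c "\<lambda>z. z" "\<lambda>z. z"] assms by auto

lemma norm_le_limit_at_disc_boundary:
  assumes h: "h holomorphic_on ball 0 1" and lim: "((\<lambda>z. norm (h z)) \<longlongrightarrow> M) at_disc_boundary"
    and z: "z \<in> ball 0 1"
  shows "norm (h z) \<le> M"
proof (rule field_le_epsilon)
  fix e :: real assume "e > 0"
  then have "eventually (\<lambda>w. norm (h w) < M + e) at_disc_boundary"
    using order_tendstoD(2)[OF lim] by simp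
  then obtain \<rho> where \<rho>: "\<rho> < 1" "\<And>w. \<rho> < norm w \<Longrightarrow> norm w < 1 \<Longrightarrow> norm (h w) < M + e"
    unfolding eventually_at_disc_boundary by blast
  define r where "r = (max \<rho> (norm z) + 1) / 2"
  have r: "\<rho> < r" "norm z < r" "r < 1" using \<rho>(1) z by (auto simp: r_def)
  then have "0 < r" using norm_ge_zero[of z] by linarith
  show "norm (h z) \<le> M + e"
  proof (rule maximum_modulus_frontier[of h "ball 0 r"])
    show "h holomorphic_on interior (ball 0 r)" "continuous_on (closure (ball 0 r)) h"
      using r \<open>0 < r\<close> by (auto intro!: holomorphic_on_subset[OF h] holomorphic_on_imp_continuous_on)
    show "norm (h w) \<le> M + e" if "w \<in> frontier (ball 0 r)" for w
      using that r \<open>0 < r\<close> \<rho>(2)[of w] by (auto simp: frontier_ball)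
  qed (use r in auto)
qed

lemma zero_free_tendsto_norm_imp_constant:
  assumes h: "h holomorphic_on ball 0 1" and lim: "((\<lambda>z. norm (h z)) \<longlongrightarrow> C) at_disc_boundary"
    and nz: "\<And>z. z \<in> ball 0 1 \<Longrightarrow> h z \<noteq> 0" and z: "z \<in> ball 0 1"
  shows "h z = h 0"
proof -
  have 0: "0 \<in> ball (0::complex) 1" by simp
  have C: "C > 0"
    using norm_le_limit_at_disc_boundary[OF h lim 0] nz[OF 0] by (metis less_le_trans zero_less_norm_iff)
  have "norm (inverse (h w)) \<le> inverse C" if "w \<in> ball 0 1" for w
    using h nz C \<open>w \<in> ball 0 1\<close> unfolding norm_inverse
    by (intro norm_le_limit_at_disc_boundary[where h = "\<lambda>z. inverse (h z)", unfolded norm_inverse]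
          tendsto_inverse lim holomorphic_intros) auto
  then have "norm (h w) \<ge> C" if "w \<in> ball 0 1" for w
    using that nz C by (simp add: norm_inverse inverse_le_iff_le)
  then have "norm (h w) \<le> norm (h 0)" if "w \<in> ball 0 1" for w
    using norm_le_limit_at_disc_boundary[OF h lim that] 0 by (meson order_trans)
  then have "h constant_on ball 0 1"
    using maximum_modulus_principle[OF h open_ball connected_ball open_ball order_refl 0] by blast
  then show ?thesis using z 0 unfolding constant_on_def by metis
qed

lemma tendsto_norm_imp_finite_zeros:
  assumes h: "h holomorphic_on ball 0 1" and lim: "((\<lambda>z. norm (h z)) \<longlongrightarrow> C) at_disc_boundary"
    and w: "w \<in> ball 0 1" "h w \<noteq> 0"
  shows "finite {z\<in>ball 0 1. h z = 0}"
proof -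
  have "C > 0"
    using norm_le_limit_at_disc_boundary[OF h lim w(1)] w(2) by (metis less_le_trans zero_less_norm_iff)
  then have "eventually (\<lambda>z. norm (h z) > C / 2) at_disc_boundary"
    using order_tendstoD(1)[OF lim, of "C/2"] by simp
  then obtain \<rho> where \<rho>: "\<rho> < 1" "\<And>z. \<rho> < norm z \<Longrightarrow> norm z < 1 \<Longrightarrow> norm (h z) > C / 2"
    unfolding eventually_at_disc_boundary by blast
  have "finite {z\<in>cball 0 (max \<rho> 0). h z = 0}"
    using \<rho>(1) w by (intro finite_zeros_in_compact[OF h open_ball connected_ball]) auto
  moreover have "{z\<in>ball 0 1. h z = 0} \<subseteq> {z\<in>cball 0 (max \<rho> 0). h z = 0}"
    using \<rho>(2) \<open>C > 0\<close> by (force simp: not_less)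
  ultimately show ?thesis by (rule finite_subset[rotated])
qed

section \<open>Blaschke factors\<close>

definition blaschke :: "complex \<Rightarrow> complex \<Rightarrow> complex" where
  "blaschke a z = (z - a) / (1 - cnj a * z)"

lemma blaschke_denominator_nonzero: "norm a * norm z < 1 \<Longrightarrow> 1 - cnj a * z \<noteq> 0"
  by (metis complex_mod_cnj norm_mult norm_one order.irrefl right_minus_eq)

lemma blaschke_denominator_nonzero_disc:
  assumes "norm a < 1" "norm z \<le> 1"
  shows "1 - cnj a * z \<noteq> 0"
  using assms mult_left_le[of "norm z" "norm a"] by (intro blaschke_denominator_nonzero) auto

lemma blaschke_eq_0_iff:
  assumes "norm a < 1" "norm z \<le> 1"
  shows "blaschke a z = 0 \<longleftrightarrow> z = a"
  using blaschke_denominator_nonzero_disc[OF assms] by (simp add: blaschke_def)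

lemma holomorphic_on_blaschke:
  assumes "norm a * r \<le> 1"
  shows "blaschke a holomorphic_on ball 0 r"
proof -
  have "norm a * norm z < 1" if "norm z < r" for z
  proof (cases "a = 0")
    case False
    then have "norm a * norm z < norm a * r" using that by simp
    then show ?thesis using assms by linarith
  qed simp
  then have "1 - cnj a * z \<noteq> 0" if "z \<in> ball 0 r" for z
    by (intro blaschke_denominator_nonzero) (use that in auto)
  then show ?thesis
    unfolding blaschke_def by (intro holomorphic_intros) auto
qed

lemma holomorphic_on_blaschke_beyond_disc:
  assumes "norm a < 1"
  obtains R where "1 < R" "blaschke a holomorphic_on ball 0 R"
proof
  have "0 < 1 + norm a" by (simp add: add_pos_nonneg)
  then show "1 < 2 / (1 + norm a)" "blaschke a holomorphic_on ball 0 (2 / (1 + norm a))"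
    using assms by (auto intro!: holomorphic_on_blaschke simp: field_simps)
qed

lemma has_field_derivative_blaschke:
  assumes "1 - cnj a * z \<noteq> 0"
  shows "(blaschke a has_field_derivative (1 - cnj a * a) / (1 - cnj a * z)^2) (at z)"
  unfolding blaschke_def
  by (rule derivative_eq_intros refl | use assms in \<open>simp add: field_simps power2_eq_square\<close>)+

lemma blaschke_denominator_on_sphere:
  assumes "norm z = 1"
  shows "1 - cnj a * z = z * cnj (z - a)"
  using assms complex_norm_square[of z] by (simp add: algebra_simps)

lemma norm_blaschke_on_sphere:
  assumes "norm a < 1" "norm z = 1"
  shows "norm (blaschke a z) = 1"
proof -
  have "z \<noteq> a" using assms by auto
  then show ?thesis
    using assms by (simp add: blaschke_def blaschke_denominator_on_sphere norm_divide norm_mult del: complex_cnj_diff)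
qed

lemma tendsto_norm_blaschke:
  assumes "norm a < 1"
  shows "((\<lambda>z. norm (blaschke a z)) \<longlongrightarrow> 1) at_disc_boundary"
proof (rule tendsto_at_disc_boundary_of_sphere)
  obtain R where "1 < R" "blaschke a holomorphic_on ball 0 R"
    using holomorphic_on_blaschke_beyond_disc[OF assms] .
  moreover from \<open>1 < R\<close> have "cball 0 1 \<subseteq> ball (0::complex) R" by auto
  ultimately show "continuous_on (cball 0 1) (\<lambda>z. norm (blaschke a z))"
    by (intro continuous_on_norm holomorphic_on_imp_continuous_on) (rule holomorphic_on_subset)
  show "norm (blaschke a w) = 1" if "w \<in> sphere 0 1" for w
    using assms that by (simp add: norm_blaschke_on_sphere)
qed

lemma num_zeros_blaschke:
  assumes "norm a < 1"
  shows "num_zeros (blaschke a) (ball 0 1) = 1"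
proof -
  have "{z\<in>ball 0 1. blaschke a z = 0} = {a}"
    using assms by (auto simp: blaschke_eq_0_iff)
  moreover have "1 - cnj a * a \<noteq> 0"
    using assms blaschke_denominator_nonzero_disc[of a a] by simp
  ultimately show ?thesis
    unfolding num_zeros_def using DERIV_imp_deriv[OF has_field_derivative_blaschke]
    by (simp add: zero_multiplicity_eq_1 blaschke_def)
qed

lemma blaschke_log_derivative_on_sphere:
  assumes a: "norm a < 1" and z: "norm z = 1"
  shows "z * deriv (blaschke a) z / blaschke a z = of_real ((1 - norm a ^ 2) / norm (z - a) ^ 2)"
proof -
  have d: "1 - cnj a * z \<noteq> 0" "z - a \<noteq> 0" "z \<noteq> 0"
    using blaschke_denominator_nonzero_disc[of a z] a z by auto
  have quot: "z * (c / e\<^sup>2) / (u / e) = c / (u * (e / z))" if "e \<noteq> 0" "u \<noteq> 0" "z \<noteq> 0"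
    for c e u :: complex
    using that by (simp add: field_simps power2_eq_square)
  have "z * deriv (blaschke a) z / blaschke a z
      = z * ((1 - cnj a * a) / (1 - cnj a * z)^2) / ((z - a) / (1 - cnj a * z))"
    using DERIV_imp_deriv[OF has_field_derivative_blaschke[OF d(1)]] by (simp add: blaschke_def)
  also have "\<dots> = (1 - cnj a * a) / ((z - a) * cnj (z - a))"
    by (subst quot[OF d]) (simp add: blaschke_denominator_on_sphere[OF z] d(3) del: complex_cnj_diff)
  also have "\<dots> = of_real ((1 - norm a ^ 2) / norm (z - a) ^ 2)"
    by (simp only: of_real_divide of_real_diff of_real_1 complex_norm_square
          mult.commute[of "cnj a" a])
  finally show ?thesis .
qed

section \<open>Constant modulus on the unit circle\<close>

lemma blaschke_factor:
  assumes h: "h holomorphic_on ball 0 1" "((\<lambda>z. norm (h z)) \<longlongrightarrow> C) at_disc_boundary"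
    and a: "a \<in> ball 0 1" "h a = 0"
  obtains g where "g holomorphic_on ball 0 1" "((\<lambda>z. norm (g z)) \<longlongrightarrow> C) at_disc_boundary"
    "\<And>z. z \<in> ball 0 1 \<Longrightarrow> h z = blaschke a z * g z"
proof
  define q where "q = (\<lambda>z. if z = a then deriv h a else (h z - h a) / (z - a))"
  show "(\<lambda>z. q z * (1 - cnj a * z)) holomorphic_on ball 0 1"
    unfolding q_def using a(1) by (intro holomorphic_intros pole_lemma[OF h(1)]) auto
  show eq: "h z = blaschke a z * (q z * (1 - cnj a * z))" if "z \<in> ball 0 1" for z
    using a that blaschke_denominator_nonzero_disc[of a z] by (auto simp: q_def blaschke_def)
  have "eventually (\<lambda>z. norm (h z) / norm (blaschke a z) = norm (q z * (1 - cnj a * z))) at_disc_boundary"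
    unfolding eventually_at_disc_boundary
  proof (intro exI[of _ "norm a"] conjI allI impI)
    fix z :: complex assume z: "norm a < norm z" "norm z < 1"
    then have "blaschke a z \<noteq> 0"
      using a(1) blaschke_denominator_nonzero_disc[of a z] by (auto simp: blaschke_def)
    then show "norm (h z) / norm (blaschke a z) = norm (q z * (1 - cnj a * z))"
      using eq[of z] z by (simp add: norm_mult)
  qed (use a in auto)
  moreover have "((\<lambda>z. norm (h z) / norm (blaschke a z)) \<longlongrightarrow> C / 1) at_disc_boundary"
    using a(1) by (intro tendsto_divide h(2) tendsto_norm_blaschke) auto
  ultimately show "((\<lambda>z. norm (q z * (1 - cnj a * z))) \<longlongrightarrow> C) at_disc_boundary"
    by (simp add: tendsto_cong)
qed

lemma num_zeros_blaschke_mult: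
  assumes a: "a \<in> ball 0 1" and g: "g holomorphic_on ball 0 1" "finite {z\<in>ball 0 1. g z = 0}"
    and nz: "\<exists>w\<in>ball 0 1. blaschke a w * g w \<noteq> 0"
  shows "num_zeros (\<lambda>z. blaschke a z * g z) (ball 0 1) = Suc (num_zeros g (ball 0 1))"
proof -
  have "finite {z\<in>ball 0 1. blaschke a z = 0}"
    by (rule finite_subset[of _ "{a}"]) (use a in \<open>auto simp: blaschke_eq_0_iff\<close>)
  then show ?thesis
    using a nz num_zeros_blaschke[of a] holomorphic_on_blaschke[of a 1]
    by (subst num_zeros_mult[OF _ g(1) open_ball connected_ball nz _ g(2)]) auto
qed

text \<open>For \<open>z = exp (\<i> \<theta>)\<close>, \<open>Re (z H'(z) / H(z))\<close> is the derivative of \<open>\<theta> \<mapsto> arg H(exp (\<i> \<theta>))\<close>.\<close>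
definition extends_with_arg_rate :: "(real \<Rightarrow> bool) \<Rightarrow> (complex \<Rightarrow> complex) \<Rightarrow> bool" where
  "extends_with_arg_rate P h \<longleftrightarrow> (\<exists>R>1. \<exists>H. H holomorphic_on ball 0 R \<and> (\<forall>z\<in>ball 0 1. H z = h z) \<and>
      (\<forall>z\<in>sphere 0 1. H z \<noteq> 0 \<and> P (Re (z * deriv H z / H z))))"

lemma extends_with_arg_rate_mono:
  "extends_with_arg_rate P h \<Longrightarrow> (\<And>x. P x \<Longrightarrow> Q x) \<Longrightarrow> extends_with_arg_rate Q h"
  unfolding extends_with_arg_rate_def by meson

lemma extends_with_arg_rate_const:
  assumes "c \<noteq> 0" "\<And>z. z \<in> ball 0 1 \<Longrightarrow> h z = c"
  shows "extends_with_arg_rate (\<lambda>x. 0 \<le> x) h"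
  unfolding extends_with_arg_rate_def using assms
  by (intro exI[of _ 2] conjI exI[of _ "\<lambda>_. c"]) auto

lemma extends_with_arg_rate_blaschke_mult:
  assumes a: "a \<in> ball 0 1" and g: "extends_with_arg_rate (\<lambda>x. 0 \<le> x) g"
    and h: "\<And>z. z \<in> ball 0 1 \<Longrightarrow> h z = blaschke a z * g z"
  shows "extends_with_arg_rate (\<lambda>x. 0 < x) h"
proof -
  obtain R G where R: "R > 1" and G: "G holomorphic_on ball 0 R" "\<forall>z\<in>ball 0 1. G z = g z"
    and G_sphere: "\<And>z. z \<in> sphere 0 1 \<Longrightarrow> G z \<noteq> 0 \<and> 0 \<le> Re (z * deriv G z / G z)"
    using g unfolding extends_with_arg_rate_def by blast
  obtain R\<^sub>B where R\<^sub>B: "1 < R\<^sub>B" "blaschke a holomorphic_on ball 0 R\<^sub>B"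
    using holomorphic_on_blaschke_beyond_disc a by auto
  define R' where "R' = min R R\<^sub>B"
  have R': "1 < R'" "R' \<le> R" using R R\<^sub>B(1) by (auto simp: R'_def)
  have B: "blaschke a holomorphic_on ball 0 R'"
    by (rule holomorphic_on_subset[OF R\<^sub>B(2)]) (auto simp: R'_def)
  have G': "G holomorphic_on ball 0 R'" by (rule holomorphic_on_subset[OF G(1)]) (use R'(2) in auto)
  have "blaschke a z * G z \<noteq> 0 \<and> 0 < Re (z * deriv (\<lambda>w. blaschke a w * G w) z / (blaschke a z * G z))"
    if z: "z \<in> sphere 0 1" for z
  proof -
    have zR': "z \<in> ball 0 R'" using z R'(1) by simp
    have nz: "blaschke a z \<noteq> 0" "G z \<noteq> 0"
      using z a G_sphere[OF z] norm_blaschke_on_sphere[of a z] by auto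
    have "z * deriv (\<lambda>w. blaschke a w * G w) z / (blaschke a z * G z)
        = z * deriv (blaschke a) z / blaschke a z + z * deriv G z / G z"
      using nz holomorphic_on_imp_differentiable_at[OF B open_ball zR']
        holomorphic_on_imp_differentiable_at[OF G' open_ball zR']
      by (simp add: field_simps)
    moreover have "norm a ^ 2 < 1" "z \<noteq> a"
      using a z by (auto simp: abs_square_less_1)
    then have "0 < (1 - norm a ^ 2) / norm (z - a) ^ 2" by simp
    ultimately show ?thesis
      using nz G_sphere[OF z] blaschke_log_derivative_on_sphere[of a z] a z by simp
  qed
  then show ?thesis
    unfolding extends_with_arg_rate_def using R'(1) B G' G(2) h
    by (intro exI[of _ R'] conjI exI[of _ "\<lambda>w. blaschke a w * G w"] holomorphic_intros) auto
qed

lemma tendsto_norm_imp_extends_with_nonneg_arg_rate: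
  assumes "h holomorphic_on ball 0 1" "((\<lambda>z. norm (h z)) \<longlongrightarrow> C) at_disc_boundary"
    and "\<exists>w\<in>ball 0 1. h w \<noteq> 0"
  shows "extends_with_arg_rate (\<lambda>x. 0 \<le> x) h"
  using assms
proof (induction "num_zeros h (ball 0 1)" arbitrary: h rule: less_induct)
  case less
  then obtain w where w: "w \<in> ball 0 1" "h w \<noteq> 0" by blast
  show ?case
  proof (cases "\<exists>a\<in>ball 0 1. h a = 0")
    case False
    then have "h z = h 0" if "z \<in> ball 0 1" for z
      using zero_free_tendsto_norm_imp_constant[OF less.prems(1,2) _ that] by blast
    moreover have "h 0 \<noteq> 0" using False by simp
    ultimately show ?thesis by (intro extends_with_arg_rate_const)
  next
    case True
    then obtain a where a: "a \<in> ball 0 1" "h a = 0" by blast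
    obtain g where g: "g holomorphic_on ball 0 1" "((\<lambda>z. norm (g z)) \<longlongrightarrow> C) at_disc_boundary"
      and h_eq: "\<And>z. z \<in> ball 0 1 \<Longrightarrow> h z = blaschke a z * g z"
      using blaschke_factor[OF less.prems(1,2) a] by blast
    have gw: "g w \<noteq> 0" using w h_eq by auto
    have "num_zeros h (ball 0 1) = num_zeros (\<lambda>z. blaschke a z * g z) (ball 0 1)"
      using h_eq by (intro num_zeros_cong) auto
    also have "\<dots> = Suc (num_zeros g (ball 0 1))"
      using w h_eq tendsto_norm_imp_finite_zeros[OF g w(1) gw]
      by (intro num_zeros_blaschke_mult[OF a(1) g(1)]) auto
    finally have "num_zeros g (ball 0 1) < num_zeros h (ball 0 1)" by simp
    then have "extends_with_arg_rate (\<lambda>x. 0 \<le> x) g"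
      using less.hyps[OF _ g] w(1) gw by blast
    then have "extends_with_arg_rate (\<lambda>x. 0 < x) h"
      by (rule extends_with_arg_rate_blaschke_mult[OF a(1) _ h_eq])
    then show ?thesis
      by (rule extends_with_arg_rate_mono) (rule less_imp_le)
  qed
qed

lemma tendsto_norm_imp_extends_with_pos_arg_rate:
  assumes h: "h holomorphic_on ball 0 1" "((\<lambda>z. norm (h z)) \<longlongrightarrow> C) at_disc_boundary"
    and nc: "\<not> h constant_on ball 0 1"
  shows "extends_with_arg_rate (\<lambda>x. 0 < x) h"
proof -
  obtain a where a: "a \<in> ball 0 1" "h a = 0"
    using zero_free_tendsto_norm_imp_constant[OF h] nc unfolding constant_on_def by blast
  obtain w where w: "w \<in> ball 0 1" "h w \<noteq> 0"
    using nc unfolding constant_on_def by blast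
  obtain g where g: "g holomorphic_on ball 0 1" "((\<lambda>z. norm (g z)) \<longlongrightarrow> C) at_disc_boundary"
    and h_eq: "\<And>z. z \<in> ball 0 1 \<Longrightarrow> h z = blaschke a z * g z"
    using blaschke_factor[OF h a] by blast
  have "extends_with_arg_rate (\<lambda>x. 0 \<le> x) g"
    using w h_eq by (intro tendsto_norm_imp_extends_with_nonneg_arg_rate[OF g]) auto
  then show ?thesis by (rule extends_with_arg_rate_blaschke_mult[OF a(1) _ h_eq])
qed

section \<open>Counting zeros by the argument principle\<close>

lemma sphere_subset_open_imp_annulus_subset:
  fixes U :: "complex set"
  assumes "open U" "sphere 0 1 \<subseteq> U"
  obtains \<delta> where "0 < \<delta>" "\<And>z. 1 - \<delta> < norm z \<Longrightarrow> norm z < 1 + \<delta> \<Longrightarrow> z \<in> U"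
proof -
  obtain \<epsilon> where \<epsilon>: "0 < \<epsilon>" "(\<Union>u\<in>sphere 0 1. ball u \<epsilon>) \<subseteq> U"
    using compact_subset_open_imp_ball_epsilon_subset[OF compact_sphere assms] by blast
  have "z \<in> U" if "1 - min \<epsilon> 1 < norm z" "norm z < 1 + min \<epsilon> 1" for z
  proof -
    have "z \<noteq> 0" using that by auto
    then have "z / of_real (norm z) \<in> sphere 0 1" by (simp add: norm_divide)
    moreover have "z / of_real (norm z) - z = of_real (1 - norm z) * (z / of_real (norm z))"
      using \<open>z \<noteq> 0\<close> by (simp add: field_simps)
    then have "dist (z / of_real (norm z)) z = \<bar>1 - norm z\<bar> * (norm z / \<bar>norm z\<bar>)"
      by (simp only: dist_norm norm_mult norm_of_real norm_divide)
    then have "dist (z / of_real (norm z)) z = \<bar>norm z - 1\<bar>"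
      using \<open>z \<noteq> 0\<close> by simp
    ultimately show ?thesis
      using that \<epsilon>(2) by (force simp: abs_less_iff)
  qed
  then show ?thesis using that[of "min \<epsilon> 1"] \<epsilon>(1) by auto
qed

lemma contour_integral_logderiv_circlepath:
  assumes R: "1 < R" and H: "H holomorphic_on ball 0 R" and nz: "\<And>z. z \<in> sphere 0 1 \<Longrightarrow> H z \<noteq> 0"
  shows "contour_integral (circlepath 0 1) (\<lambda>z. deriv H z / H z)
      = 2 * pi * \<i> * of_nat (num_zeros H (ball 0 1))"
proof -
  have "open (ball 0 R \<inter> H -` (-{0}))"
    by (intro continuous_open_preimage holomorphic_on_imp_continuous_on H open_ball open_Compl closed_singleton)
  then obtain \<delta> where \<delta>: "0 < \<delta>" "\<And>z. 1 - \<delta> < norm z \<Longrightarrow> norm z < 1 + \<delta> \<Longrightarrow> H z \<noteq> 0"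
    by (rule sphere_subset_open_imp_annulus_subset) (use R nz in \<open>auto simp: subset_eq\<close>)
  define S where "S = ball (0::complex) (min R (1 + \<delta>))"
  have S: "open S" "connected S" "cball 0 1 \<subseteq> S" "H holomorphic_on S" "1 \<in> S"
    using R \<delta>(1) H by (auto simp: S_def intro: holomorphic_on_subset)
  have H1: "H 1 \<noteq> 0" using nz by simp
  then have H_nz: "\<exists>w\<in>S. H w \<noteq> 0" using S(5) by blast
  have "norm z < 1" if "z \<in> S" "H z = 0" for z
    using that \<delta> by (force simp: S_def)
  then have zeros: "{w\<in>S. H w = 0} = {z\<in>ball 0 1. H z = 0}"
    using S(3) by auto
  have "finite {z\<in>cball 0 1. H z = 0}"
    by (rule finite_zeros_in_compact[OF S(4,1,2) compact_cball S(3) H_nz])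
  then have "finite {z\<in>ball 0 1. H z = 0}"
    by (rule finite_subset[rotated]) auto
  then have "contour_integral (circlepath 0 1) (\<lambda>z. deriv H z * 1 / H z)
      = 2 * pi * \<i> * (\<Sum>p\<in>{z\<in>ball 0 1. H z = 0}. winding_number (circlepath 0 1) p * 1 * zorder H p)"
    using S R nz zeros
    by (subst argument_principle[of S H "{}"])
       (auto intro!: winding_number_zero_outside[of _ "cball 0 1"] simp: S_def)
  also have "(\<Sum>p\<in>{z\<in>ball 0 1. H z = 0}. winding_number (circlepath 0 1) p * 1 * zorder H p)
      = of_nat (num_zeros H (ball 0 1))"
    unfolding num_zeros_def of_nat_sum
    using S(3) zorder_eq_zero_multiplicity[OF S(4,1,2) _ H_nz]
    by (intro sum.cong refl) (auto simp: winding_number_circlepath subset_iff)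
  finally show ?thesis by simp
qed

lemma has_contour_integral_logderiv_difference_circlepath:
  assumes R: "1 < R" and H: "H holomorphic_on ball 0 R"
    and pos: "\<And>z. z \<in> sphere 0 1 \<Longrightarrow> H z \<noteq> 0 \<and> 0 < Re (z * deriv H z / H z)"
  shows "((\<lambda>z. 1 / z + deriv (deriv H) z / deriv H z - deriv H z / H z) has_contour_integral 0)
      (circlepath 0 1)"
proof -
  define \<phi> where "\<phi> = (\<lambda>z. z * deriv H z / H z)"
  define U where "U = ball 0 R \<inter> H -` (-{0})"
  define T where "T = U \<inter> \<phi> -` {w. 0 < Re w}"
  have H': "deriv H holomorphic_on ball 0 R" using H by (rule holomorphic_deriv) simp
  have "open U"
    unfolding U_def
    by (intro continuous_open_preimage holomorphic_on_imp_continuous_on H open_ball open_Compl closed_singleton)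
  moreover have "U \<subseteq> ball 0 R" by (auto simp: U_def)
  then have "\<phi> holomorphic_on U"
    unfolding \<phi>_def using \<open>open U\<close> holomorphic_on_subset[OF H] holomorphic_on_subset[OF H']
    by (intro holomorphic_intros) (auto simp: U_def)
  ultimately have "open T"
    unfolding T_def by (intro continuous_open_preimage holomorphic_on_imp_continuous_on open_halfspace_Re_gt)
  have T: "H z \<noteq> 0" "deriv H z \<noteq> 0" "z \<noteq> 0" "0 < Re (\<phi> z)" if "z \<in> T" for z
    using that by (auto simp: T_def U_def \<phi>_def)
  \<comment> \<open>On \<open>T\<close> the values of \<open>\<phi>\<close> avoid the branch cut of \<open>Ln\<close>, so \<open>Ln \<circ> \<phi>\<close> is a primitive.\<close>
  have "((\<lambda>z. Ln (\<phi> z)) has_field_derivative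
      1 / z + deriv (deriv H) z / deriv H z - deriv H z / H z) (at z within T)" if "z \<in> T" for z
  proof -
    have "z \<in> ball 0 R" using that by (simp add: T_def U_def)
    then have d\<phi>: "(\<phi> has_field_derivative
        ((1 * deriv H z + deriv (deriv H) z * z) * H z - z * deriv H z * deriv H z) / (H z * H z)) (at z)"
      unfolding \<phi>_def using T[OF that] holomorphic_derivI[OF H open_ball] holomorphic_derivI[OF H' open_ball]
      by (intro DERIV_divide DERIV_mult DERIV_ident) auto
    have "\<phi> z \<notin> \<real>\<^sub>\<le>\<^sub>0" using T(4)[OF that] by (auto simp: complex_nonpos_Reals_iff)
    from DERIV_chain2[OF has_field_derivative_Ln[OF this] d\<phi>] show ?thesis
      by (rule has_field_derivative_at_within[OF DERIV_cong])
         (use T[OF that] in \<open>simp add: \<phi>_def field_simps\<close>)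
  qed
  moreover have "sphere 0 1 \<subseteq> T" using R pos by (auto simp: T_def U_def \<phi>_def)
  ultimately show ?thesis by (intro Cauchy_theorem_primitive) auto
qed

lemma contour_integral_logderiv_deriv_circlepath:
  assumes R: "1 < R" and H: "H holomorphic_on ball 0 R"
    and pos: "\<And>z. z \<in> sphere 0 1 \<Longrightarrow> H z \<noteq> 0 \<and> 0 < Re (z * deriv H z / H z)"
  shows "contour_integral (circlepath 0 1) (\<lambda>z. deriv (deriv H) z / deriv H z)
      = contour_integral (circlepath 0 1) (\<lambda>z. deriv H z / H z) - 2 * pi * \<i>"
proof -
  have "((\<lambda>z. 1 / z) has_contour_integral 2 * pi * \<i>) (circlepath 0 1)"
    using Cauchy_integral_circlepath_simple[of "\<lambda>_. 1" 0 1 0] by simp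
  moreover have "(\<lambda>z. deriv H z / H z) contour_integrable_on circlepath 0 1"
    using R pos holomorphic_deriv[OF H open_ball] H
    by (intro contour_integrable_continuous_circlepath continuous_on_divide
          holomorphic_on_imp_continuous_on[THEN continuous_on_subset]) auto
  ultimately have "((\<lambda>z. (1 / z + deriv (deriv H) z / deriv H z - deriv H z / H z) - 1 / z + deriv H z / H z)
      has_contour_integral 0 - 2 * pi * \<i> + contour_integral (circlepath 0 1) (\<lambda>z. deriv H z / H z))
      (circlepath 0 1)"
    by (intro has_contour_integral_add has_contour_integral_diff has_contour_integral_integral
          has_contour_integral_logderiv_difference_circlepath[OF R H pos])
  then show ?thesis by (simp add: contour_integral_unique)
qed

lemma num_zeros_eq_num_zeros_deriv_plus_one_disc:
  assumes "extends_with_arg_rate (\<lambda>x. 0 < x) h"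
  shows "num_zeros h (ball 0 1) = num_zeros (deriv h) (ball 0 1) + 1"
proof -
  obtain R H where R: "1 < R" and H: "H holomorphic_on ball 0 R" "\<And>z. z \<in> ball 0 1 \<Longrightarrow> H z = h z"
    and pos: "\<And>z. z \<in> sphere 0 1 \<Longrightarrow> H z \<noteq> 0 \<and> 0 < Re (z * deriv H z / H z)"
    using assms unfolding extends_with_arg_rate_def by blast
  have "deriv H z \<noteq> 0" if "z \<in> sphere 0 1" for z
    using pos[OF that] by auto
  then have "2 * pi * \<i> * of_nat (num_zeros (deriv H) (ball 0 1))
      = 2 * pi * \<i> * of_nat (num_zeros H (ball 0 1)) - 2 * pi * \<i>"
    using contour_integral_logderiv_deriv_circlepath[OF R H(1) pos]
      contour_integral_logderiv_circlepath[OF R H(1)] pos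
      contour_integral_logderiv_circlepath[OF R holomorphic_deriv[OF H(1) open_ball]]
    by simp
  then have "2 * pi * \<i> * (of_nat (num_zeros H (ball 0 1))
      - of_nat (num_zeros (deriv H) (ball 0 1) + 1)) = 0"
    by (simp add: algebra_simps)
  then have "num_zeros H (ball 0 1) = num_zeros (deriv H) (ball 0 1) + 1"
    by (simp del: of_nat_Suc)
  moreover have "num_zeros H (ball 0 1) = num_zeros h (ball 0 1)"
    using H(2) by (rule num_zeros_cong[OF open_ball])
  moreover have "deriv H z = deriv h z" if "z \<in> ball 0 1" for z
  proof (rule deriv_cong_ev[OF _ refl])
    show "eventually (\<lambda>x. H x = h x) (nhds z)"
      using eventually_nhds_in_open[OF open_ball that] by (rule eventually_mono) (simp add: H(2))
  qed
  then have "num_zeros (deriv H) (ball 0 1) = num_zeros (deriv h) (ball 0 1)"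
    by (rule num_zeros_cong[OF open_ball])
  ultimately show ?thesis by simp
qed

section \<open>Bounded simply connected domains\<close>

lemma num_zeros_eq_num_zeros_deriv_plus_one:
  assumes D: "open D" "simply_connected D" "bounded D" "D \<noteq> {}"
    and f: "continuous_on (closure D) f" "f holomorphic_on D" "\<not> f constant_on D"
    and C: "\<And>z. z \<in> frontier D \<Longrightarrow> norm (f z) = C"
  shows "num_zeros f D = num_zeros (deriv f) D + 1"
proof -
  have "connected D" using D(2) by (rule simply_connected_imp_connected)
  obtain \<phi> \<psi> where \<phi>: "\<phi> holomorphic_on D" "\<And>w. w \<in> D \<Longrightarrow> \<phi> w \<in> ball 0 1 \<and> \<psi> (\<phi> w) = w"
    and \<psi>: "\<psi> holomorphic_on ball 0 1" "\<And>z. z \<in> ball 0 1 \<Longrightarrow> \<psi> z \<in> D \<and> \<phi> (\<psi> z) = z"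
    using Riemann_mapping_theorem[of D] D not_bounded_UNIV by metis
  have inj: "inj_on \<psi> (ball 0 1)" by (metis \<psi>(2) inj_on_def)
  have img: "\<psi> ` ball 0 1 = D" using \<phi>(2) \<psi>(2) by force
  have h: "(\<lambda>z. f (\<psi> z)) holomorphic_on ball 0 1"
    using holomorphic_on_compose_gen[OF \<psi>(1) f(2)] img by (simp add: comp_def)
  have "((\<lambda>z. norm (f (\<psi> z))) \<longlongrightarrow> C) at_disc_boundary"
    using \<phi>(2) \<psi>(2)
    by (intro tendsto_at_disc_boundary_compose[of D "\<lambda>z. norm (f z)" C \<phi> \<psi>] D(3) C
          continuous_on_norm f(1) holomorphic_on_imp_continuous_on[OF \<phi>(1)]) auto
  moreover have "\<not> (\<lambda>z. f (\<psi> z)) constant_on ball 0 1"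
    using f(3) \<phi>(2) unfolding constant_on_def by metis
  ultimately have "num_zeros (\<lambda>z. f (\<psi> z)) (ball 0 1) = num_zeros (deriv (\<lambda>z. f (\<psi> z))) (ball 0 1) + 1"
    by (intro num_zeros_eq_num_zeros_deriv_plus_one_disc tendsto_norm_imp_extends_with_pos_arg_rate h)
  moreover have "num_zeros (\<lambda>z. f (\<psi> z) * 1) (ball 0 1) = num_zeros f D"
    using f(3) unfolding constant_on_def
    by (intro num_zeros_compose_injective[OF f(2) D(1) \<open>connected D\<close> _ \<psi>(1) open_ball connected_ball inj img]) auto
  moreover have "num_zeros (deriv (\<lambda>z. f (\<psi> z))) (ball 0 1) = num_zeros (deriv f) D"
    by (rule num_zeros_deriv_compose_injective[OF f(2) D(1) \<open>connected D\<close> f(3) \<psi>(1) open_ball connected_ball inj img])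
  ultimately show ?thesis by simp
qed

theorem mainTheorem1:
  fixes \<gamma> :: "real \<Rightarrow> complex" and f :: "complex \<Rightarrow> complex" and S :: "complex set"
    and C :: real
  assumes "simple_path \<gamma>" and "pathfinish \<gamma> = pathstart \<gamma>"
    and "open S" and "inside (path_image \<gamma>) \<union> path_image \<gamma> \<subseteq> S"
    and "f holomorphic_on S"
    and "\<not> f constant_on (inside (path_image \<gamma>) \<union> path_image \<gamma>)"
    and "\<And>z. z \<in> path_image \<gamma> \<Longrightarrow> norm (f z) = C"
  shows "num_zeros f (inside (path_image \<gamma>)) = num_zeros (deriv f) (inside (path_image \<gamma>)) + 1"
proof -
  define D where "D = inside (path_image \<gamma>)"
  have D: "open D" "bounded D" "D \<noteq> {}" "frontier D = path_image \<gamma>"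
    using Jordan_inside_outside[OF assms(1,2)] by (auto simp: D_def)
  then have closure: "closure D = D \<union> path_image \<gamma>"
    using closure_Un_frontier by blast
  have "simply_connected D" unfolding D_def using assms(1) by (rule simply_connected_inside_simple_path)
  moreover have "continuous_on (D \<union> path_image \<gamma>) f"
    unfolding D_def by (rule holomorphic_on_imp_continuous_on[OF holomorphic_on_subset[OF assms(5,4)]])
  then have "continuous_on (closure D) f" by (simp only: closure)
  moreover have "\<not> f constant_on D"
    using assms(6) continuous_constant_on_closure[OF \<open>continuous_on (closure D) f\<close>] closure
    unfolding constant_on_def D_def by metis
  moreover have "f holomorphic_on D" using assms(4,5) by (auto simp: D_def intro: holomorphic_on_subset)
  ultimately show ?thesis
    using num_zeros_eq_num_zeros_deriv_plus_one[of D f C] D assms(7) by (simp add: D_def)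
qed

end
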